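(* Let $R$ be a semisimple commutative ring, $M$ an $R$-module and $C$ an $R$-linear relation on $M$. The following are equivalent: (1) there exists a reduction $(X\mid\rho)$ of $(M,C)$ that meets in the radical; (2) $C^\sharp=C^\flat\oplus Y$ for some $R$-submodule $Y$ carrying an $R[T,T^{-1}]$-module structure (extending its $R$-module structure) such that, for $y,z\in Y$, $Ty=z$ if and only if $z\in Cy$.
   Context: An $R$-linear relation on $M$ is an $R$-submodule $C\subseteq M\oplus M$; $Cm=\{m':(m,m')\in C\}$, $C^{-1}=\{(y,x):(x,y)\in C\}$. $C''$ is the set of $m\in M$ for which there is $(m_n)_{n\in\mathbb{N}}$ in $M$ with $m_0=m$ and $m_{n+1}\in Cm_n$ for all $n$; $C'$ is the set of those $m$ for which such a sequence exists with $m_n=0$ for $n\gg0$; $C^\sharp=C''\cap(C^{-1})''$; $C^\flat=C''\cap(C^{-1})'+(C^{-1})''\cap C'$. A reduction of $(M,C)$ is a pair $(X\mid\rho)$ with $X$ an $R[T,T^{-1}]$-module and $\rho\colon X\to M$ $R$-linear such that $C^\sharp=C^\flat+\mathrm{im}(\rho)$ and $\rho(Tx)\in C\rho(x)$ for all $x\in X$; it meets in the radical if $\{x\in X:\rho(x)\in C^\flat\}=\mathrm{rad}(X)$, the radical of $X$ as an $R$-module. *)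

theory Defs
  imports Complex_Main
begin

text \<open>R is semisimple: R is a semisimple module over itself, i.e. every
submodule (= ideal) of R is a direct summand of R.\<close>
definition semisimple_ring :: "'r::comm_ring_1 itself \<Rightarrow> bool" where
  "semisimple_ring TYPE('r) \<longleftrightarrow>
     (\<forall>I::'r set. module.subspace (*) I \<longrightarrow>
        (\<exists>J. module.subspace (*) J \<and> I \<inter> J = {0} \<and> (\<forall>r. \<exists>a\<in>I. \<exists>b\<in>J. r = a + b)))"

definition module_on :: "('r::comm_ring_1 \<Rightarrow> 'x::ab_group_add \<Rightarrow> 'x) \<Rightarrow> 'x set \<Rightarrow> bool" where
  "module_on sc X \<longleftrightarrow>
     0 \<in> X \<and> (\<forall>x\<in>X. \<forall>y\<in>X. x + y \<in> X) \<and> (\<forall>x\<in>X. - x \<in> X) \<and> (\<forall>c. \<forall>x\<in>X. sc c x \<in> X) \<and>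
     (\<forall>a. \<forall>x\<in>X. \<forall>y\<in>X. sc a (x + y) = sc a x + sc a y) \<and>
     (\<forall>a b. \<forall>x\<in>X. sc (a + b) x = sc a x + sc b x) \<and>
     (\<forall>a b. \<forall>x\<in>X. sc a (sc b x) = sc (a * b) x) \<and>
     (\<forall>x\<in>X. sc 1 x = x)"

definition submodule_on :: "('r::comm_ring_1 \<Rightarrow> 'x::ab_group_add \<Rightarrow> 'x) \<Rightarrow> 'x set \<Rightarrow> 'x set \<Rightarrow> bool" where
  "submodule_on sc X N \<longleftrightarrow>
     N \<subseteq> X \<and> 0 \<in> N \<and> (\<forall>x\<in>N. \<forall>y\<in>N. x + y \<in> N) \<and> (\<forall>c. \<forall>x\<in>N. sc c x \<in> N)"

definition maximal_submodule_on :: "('r::comm_ring_1 \<Rightarrow> 'x::ab_group_add \<Rightarrow> 'x) \<Rightarrow> 'x set \<Rightarrow> 'x set \<Rightarrow> bool" where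
  "maximal_submodule_on sc X N \<longleftrightarrow>
     submodule_on sc X N \<and> N \<noteq> X \<and>
     (\<forall>N'. submodule_on sc X N' \<and> N \<subseteq> N' \<longrightarrow> N' = N \<or> N' = X)"

text \<open>Radical of X as an R-module: intersection of all maximal submodules
(equal to X if there are none).\<close>
definition module_rad :: "('r::comm_ring_1 \<Rightarrow> 'x::ab_group_add \<Rightarrow> 'x) \<Rightarrow> 'x set \<Rightarrow> 'x set" where
  "module_rad sc X = X \<inter> \<Inter>{N. maximal_submodule_on sc X N}"

definition linear_on :: "('r::comm_ring_1 \<Rightarrow> 'x::ab_group_add \<Rightarrow> 'x) \<Rightarrow> ('r \<Rightarrow> 'm::ab_group_add \<Rightarrow> 'm)
     \<Rightarrow> 'x set \<Rightarrow> ('x \<Rightarrow> 'm) \<Rightarrow> bool" where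
  "linear_on scX scM X f \<longleftrightarrow>
     (\<forall>x\<in>X. \<forall>y\<in>X. f (x + y) = f x + f y) \<and> (\<forall>c. \<forall>x\<in>X. f (scX c x) = scM c (f x))"

text \<open>An R[T,T^-1]-module structure on the R-module X (extending its R-module
structure): an R-linear automorphism T of X.\<close>
definition laurent_structure_on :: "('r::comm_ring_1 \<Rightarrow> 'x::ab_group_add \<Rightarrow> 'x) \<Rightarrow> 'x set \<Rightarrow> ('x \<Rightarrow> 'x) \<Rightarrow> bool" where
  "laurent_structure_on sc X T \<longleftrightarrow> linear_on sc sc X T \<and> bij_betw T X X"

definition linear_relation :: "('r::comm_ring_1 \<Rightarrow> 'm::ab_group_add \<Rightarrow> 'm) \<Rightarrow> ('m \<times> 'm) set \<Rightarrow> bool" where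
  "linear_relation sc C \<longleftrightarrow>
     (0, 0) \<in> C \<and> (\<forall>p\<in>C. \<forall>q\<in>C. (fst p + fst q, snd p + snd q) \<in> C) \<and>
     (\<forall>c. \<forall>p\<in>C. (sc c (fst p), sc c (snd p)) \<in> C)"

definition rel_app :: "('m \<times> 'm) set \<Rightarrow> 'm \<Rightarrow> 'm set" where
  "rel_app C m = {m'. (m, m') \<in> C}"

definition rel_inv :: "('m \<times> 'm) set \<Rightarrow> ('m \<times> 'm) set" where
  "rel_inv C = {(y, x). (x, y) \<in> C}"

text \<open>C'' (infinite chains) and C' (chains eventually zero).\<close>
definition rel_dd :: "('m \<times> 'm) set \<Rightarrow> 'm set" where
  "rel_dd C = {m. \<exists>f::nat \<Rightarrow> 'm. f 0 = m \<and> (\<forall>n. f (Suc n) \<in> rel_app C (f n))}"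

definition rel_d :: "('m::zero \<times> 'm) set \<Rightarrow> 'm set" where
  "rel_d C = {m. \<exists>f::nat \<Rightarrow> 'm. f 0 = m \<and> (\<forall>n. f (Suc n) \<in> rel_app C (f n)) \<and>
                     (\<exists>N. \<forall>n\<ge>N. f n = 0)}"

definition rel_sharp :: "('m \<times> 'm) set \<Rightarrow> 'm set" where
  "rel_sharp C = rel_dd C \<inter> rel_dd (rel_inv C)"

definition set_plus :: "'m::plus set \<Rightarrow> 'm set \<Rightarrow> 'm set" where
  "set_plus A B = {a + b | a b. a \<in> A \<and> b \<in> B}"

definition rel_flat :: "('m::monoid_add \<times> 'm) set \<Rightarrow> 'm set" where
  "rel_flat C = set_plus (rel_dd C \<inter> rel_d (rel_inv C)) (rel_dd (rel_inv C) \<inter> rel_d C)"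

definition is_reduction ::
  "('r::comm_ring_1 \<Rightarrow> 'm::ab_group_add \<Rightarrow> 'm) \<Rightarrow> ('m \<times> 'm) set \<Rightarrow>
   ('r \<Rightarrow> 'x::ab_group_add \<Rightarrow> 'x) \<Rightarrow> 'x set \<Rightarrow> ('x \<Rightarrow> 'x) \<Rightarrow> ('x \<Rightarrow> 'm) \<Rightarrow> bool" where
  "is_reduction scM C scX X TX \<rho> \<longleftrightarrow>
     module_on scX X \<and> laurent_structure_on scX X TX \<and> linear_on scX scM X \<rho> \<and>
     rel_sharp C = set_plus (rel_flat C) (\<rho> ` X) \<and>
     (\<forall>x\<in>X. \<rho> (TX x) \<in> rel_app C (\<rho> x))"

definition meets_in_radical ::
  "('m::ab_group_add \<times> 'm) set \<Rightarrow> ('r::comm_ring_1 \<Rightarrow> 'x::ab_group_add \<Rightarrow> 'x) \<Rightarrow> 'x set \<Rightarrow> ('x \<Rightarrow> 'm) \<Rightarrow> bool" where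
  "meets_in_radical C scX X \<rho> \<longleftrightarrow> {x\<in>X. \<rho> x \<in> rel_flat C} = module_rad scX X"

end

theory Submission
  imports Defs
begin

text \<open>Over a semisimple commutative ring every element r has a quasi-inverse s with r s r = r
(split 1 along a complement of the ideal R r), and this forces the radical of every module to
vanish: a submodule maximal among those avoiding a given y \<noteq> 0 is already a maximal submodule.
So for a reduction (X | \<rho>) meeting in the radical, \<rho> x \<in> C\<flat> only for x = 0; thus \<rho> is
injective and carries the T-action of X to its image Y, a complement of C\<flat> in C\<sharp>. On Y the
relation C is the graph of T: if y, z \<in> Y and z \<in> C y, then T y - z lies in Y \<inter> C 0, and every
element of C'' \<inter> C 0 lies in C\<flat>, so T y - z \<in> C\<flat> \<inter> Y = 0. Conversely such a complement Y is a
reduction of itself via the inclusion, meeting in the radical because its radical is 0.\<close>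

section \<open>Modules over von Neumann regular rings\<close>

definition von_neumann_regular :: "'r::comm_ring_1 itself \<Rightarrow> bool" where
  "von_neumann_regular TYPE('r) \<longleftrightarrow> (\<forall>r::'r. \<exists>s. r * s * r = r)"

lemma module_times: "module ((*) :: 'r::comm_ring_1 \<Rightarrow> 'r \<Rightarrow> 'r)"
  by unfold_locales (auto simp: algebra_simps)

lemma semisimple_ring_imp_von_neumann_regular:
  assumes "semisimple_ring TYPE('r::comm_ring_1)"
  shows "von_neumann_regular TYPE('r)"
  unfolding von_neumann_regular_def
proof
  fix r :: 'r
  let ?I = "range (\<lambda>t. t * r)"
  have "module.subspace (*) ?I"
    using module.subspace_span[OF module_times, of "{r}"]
    unfolding module.span_singleton[OF module_times] .
  then obtain J where J: "module.subspace (*) J" "?I \<inter> J = {0}" "\<forall>r. \<exists>a\<in>?I. \<exists>b\<in>J. r = a + b"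
    using assms unfolding semisimple_ring_def by auto
  obtain s b where b: "b \<in> J" and one: "1 = s * r + b"
    using J(3)[rule_format, of 1] by auto
  have "r * b \<in> ?I"
    by (metis mult.commute rangeI)
  moreover have "r * b \<in> J"
    using module.subspace_scale[OF module_times J(1) b] .
  ultimately have "r * b = 0"
    using J(2) by blast
  have "r = r * (s * r + b)"
    using one by simp
  also have "\<dots> = r * s * r"
    using \<open>r * b = 0\<close> by (simp add: distrib_left mult.assoc)
  finally have "r * s * r = r" ..
  then show "\<exists>s. r * s * r = r" ..
qed

context
  fixes sc :: "'r::comm_ring_1 \<Rightarrow> 'x::ab_group_add \<Rightarrow> 'x" and X :: "'x set"
  assumes module_on: "module_on sc X"
begin

lemma module_on_zero: "0 \<in> X"
  and module_on_add: "x \<in> X \<Longrightarrow> y \<in> X \<Longrightarrow> x + y \<in> X"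
  and module_on_neg: "x \<in> X \<Longrightarrow> - x \<in> X"
  and module_on_scale: "x \<in> X \<Longrightarrow> sc c x \<in> X"
  and module_on_scale_right_distrib: "x \<in> X \<Longrightarrow> y \<in> X \<Longrightarrow> sc a (x + y) = sc a x + sc a y"
  and module_on_scale_left_distrib: "x \<in> X \<Longrightarrow> sc (a + b) x = sc a x + sc b x"
  and module_on_scale_scale: "x \<in> X \<Longrightarrow> sc a (sc b x) = sc (a * b) x"
  and module_on_scale_one: "x \<in> X \<Longrightarrow> sc 1 x = x"
  using module_on unfolding module_on_def by auto

lemma module_on_diff: "x \<in> X \<Longrightarrow> y \<in> X \<Longrightarrow> x - y \<in> X"
  using module_on_add module_on_neg by (metis diff_conv_add_uminus)

lemma module_on_scale_zero_left: "x \<in> X \<Longrightarrow> sc 0 x = 0"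
  using module_on_scale_left_distrib[of x 0 0] by simp

lemma module_on_scale_zero_right: "sc a 0 = 0"
  using module_on_scale_scale[OF module_on_zero, of a 0] module_on_scale_zero_left[OF module_on_zero]
  by simp

lemma module_on_scale_minus_left: "x \<in> X \<Longrightarrow> sc (- a) x = - sc a x"
  using module_on_scale_left_distrib[of x "- a" a] module_on_scale_zero_left[of x]
  by (simp add: eq_neg_iff_add_eq_0)

lemma module_on_scale_minus_right: "x \<in> X \<Longrightarrow> sc a (- x) = - sc a x"
  using module_on_scale_right_distrib[of x "- x" a] module_on_neg[of x] module_on_scale_zero_right[of a]
  by (simp add: add_eq_0_iff2)

lemma module_on_scale_right_diff_distrib:
  "x \<in> X \<Longrightarrow> y \<in> X \<Longrightarrow> sc a (x - y) = sc a x - sc a y"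
  using module_on_scale_right_distrib[of x "- y" a] module_on_neg[of y] module_on_scale_minus_right[of y a]
  by simp

lemma submodule_on_diff:
  assumes "submodule_on sc X N" "x \<in> N" "y \<in> N"
  shows "x - y \<in> N"
proof -
  have "sc (- 1) y = - y"
    using assms module_on_scale_minus_left[of y 1] module_on_scale_one[of y]
    unfolding submodule_on_def by auto
  then show ?thesis
    using assms unfolding submodule_on_def by (metis diff_conv_add_uminus)
qed

lemma submodule_on_Union_chain:
  assumes "\<C> \<noteq> {}" "\<And>N. N \<in> \<C> \<Longrightarrow> submodule_on sc X N"
    and chain: "\<And>N N'. N \<in> \<C> \<Longrightarrow> N' \<in> \<C> \<Longrightarrow> N \<subseteq> N' \<or> N' \<subseteq> N"
  shows "submodule_on sc X (\<Union>\<C>)"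
  unfolding submodule_on_def
proof (intro conjI ballI allI)
  show "x + y \<in> \<Union>\<C>" if xy: "x \<in> \<Union>\<C>" "y \<in> \<Union>\<C>" for x y
  proof -
    obtain N N' where "N \<in> \<C>" "N' \<in> \<C>" "x \<in> N" "y \<in> N'"
      using xy by blast
    with chain[of N N'] assms(2)[of N] assms(2)[of N'] show ?thesis
      unfolding submodule_on_def by blast
  qed
qed (use assms(1,2) in \<open>unfold submodule_on_def, blast+\<close>)

lemma submodule_on_add_cyclic:
  assumes N: "submodule_on sc X N" and "z \<in> X"
  shows "submodule_on sc X {n + sc r z | n r. n \<in> N}"
  unfolding submodule_on_def
proof (intro conjI ballI allI)
  have NX: "N \<subseteq> X"
    using N unfolding submodule_on_def by blast
  show "{n + sc r z | n r. n \<in> N} \<subseteq> X"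
    using NX \<open>z \<in> X\<close> module_on_add module_on_scale by blast
  show "0 \<in> {n + sc r z | n r. n \<in> N}"
    using N module_on_scale_zero_left[OF \<open>z \<in> X\<close>] unfolding submodule_on_def by force
  show "a + b \<in> {n + sc r z | n r. n \<in> N}" if ab: "a \<in> {n + sc r z | n r. n \<in> N}"
    "b \<in> {n + sc r z | n r. n \<in> N}" for a b
  proof -
    obtain n r n' r' where "a = n + sc r z" "b = n' + sc r' z" "n \<in> N" "n' \<in> N"
      using ab by blast
    moreover from this(1,2) have "a + b = (n + n') + sc (r + r') z"
      using module_on_scale_left_distrib[OF \<open>z \<in> X\<close>] by (simp add: algebra_simps)
    ultimately show ?thesis
      using N unfolding submodule_on_def by blast
  qed
  show "sc c a \<in> {n + sc r z | n r. n \<in> N}" if "a \<in> {n + sc r z | n r. n \<in> N}" for c a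
  proof -
    from that obtain n r where a: "a = n + sc r z" "n \<in> N"
      by blast
    then have "sc c a = sc c n + sc (c * r) z"
      using NX \<open>z \<in> X\<close> module_on_scale_right_distrib module_on_scale module_on_scale_scale by auto
    then show ?thesis
      using N a(2) unfolding submodule_on_def by blast
  qed
qed

lemma maximal_avoiding_exists:
  assumes "y \<noteq> 0"
  obtains N where "submodule_on sc X N" "y \<notin> N"
    "\<And>N'. submodule_on sc X N' \<Longrightarrow> N \<subseteq> N' \<Longrightarrow> y \<notin> N' \<Longrightarrow> N' = N"
proof -
  let ?A = "{N. submodule_on sc X N \<and> y \<notin> N}"
  have "submodule_on sc X {0}"
    using module_on_zero module_on_scale_zero_right unfolding submodule_on_def by simp
  with assms have "?A \<noteq> {}"
    by blast
  moreover have "\<Union>\<C> \<in> ?A" if "\<C> \<noteq> {}" "subset.chain ?A \<C>" for \<C>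
  proof -
    have "\<C> \<subseteq> ?A" "\<And>N N'. N \<in> \<C> \<Longrightarrow> N' \<in> \<C> \<Longrightarrow> N \<subseteq> N' \<or> N' \<subseteq> N"
      using that(2) unfolding subset_chain_def by blast+
    then show ?thesis
      using submodule_on_Union_chain[OF that(1)] by blast
  qed
  ultimately have "\<exists>N\<in>?A. \<forall>N'\<in>?A. N \<subseteq> N' \<longrightarrow> N' = N"
    by (rule subset_Zorn_nonempty)
  then show thesis
    using that by blast
qed

lemma maximal_avoiding_absorbs:
  assumes N: "submodule_on sc X N"
    and N_max: "\<And>N'. submodule_on sc X N' \<Longrightarrow> N \<subseteq> N' \<Longrightarrow> y \<notin> N' \<Longrightarrow> N' = N"
    and "z \<in> X" "z \<notin> N"
  obtains n r where "n \<in> N" "y = n + sc r z"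
proof -
  let ?N' = "{n + sc r z | n r. n \<in> N}"
  have "N \<subseteq> ?N'"
  proof
    fix n
    assume "n \<in> N"
    then have "n + sc 0 z \<in> ?N'"
      by blast
    then show "n \<in> ?N'"
      using module_on_scale_zero_left[OF \<open>z \<in> X\<close>] by simp
  qed
  moreover have "0 + sc 1 z \<in> ?N'"
    using N unfolding submodule_on_def by blast
  then have "z \<in> ?N'"
    using module_on_scale_one[OF \<open>z \<in> X\<close>] by simp
  ultimately have "y \<in> ?N'"
    using N_max[OF submodule_on_add_cyclic[OF N \<open>z \<in> X\<close>]] \<open>z \<notin> N\<close> by auto
  then show thesis
    using that by blast
qed

text \<open>With e = s r idempotent and r e = r, the vector z - e z is killed by r; if it were outside N,
absorbing y into N + R(z - e z) would put r y, and then y = n + s (r y) - e n, into N.\<close>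

lemma maximal_avoiding_idempotent_part:
  assumes N: "submodule_on sc X N" and "y \<in> X" "y \<notin> N"
    and N_max: "\<And>N'. submodule_on sc X N' \<Longrightarrow> N \<subseteq> N' \<Longrightarrow> y \<notin> N' \<Longrightarrow> N' = N"
    and "z \<in> X" "n \<in> N" and y: "y = n + sc r z" and regular: "r * s * r = r"
  shows "z - sc (s * r) z \<in> N"
proof (rule ccontr)
  let ?x = "z - sc (s * r) z"
  have NX: "N \<subseteq> X"
    using N unfolding submodule_on_def by blast
  have x: "?x \<in> X"
    using \<open>z \<in> X\<close> module_on_scale module_on_diff by blast
  assume "?x \<notin> N"
  then obtain n' u where "n' \<in> N" and y_n': "y = n' + sc u ?x"
    using maximal_avoiding_absorbs[OF N N_max x] by blast
  have "sc r ?x = sc r z - sc (r * (s * r)) z"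
    using module_on_scale_right_diff_distrib[OF \<open>z \<in> X\<close> module_on_scale[OF \<open>z \<in> X\<close>]]
      module_on_scale_scale[OF \<open>z \<in> X\<close>] by simp
  then have "sc r ?x = 0"
    using regular by (simp add: mult.assoc)
  then have "sc r (sc u ?x) = 0"
    using module_on_scale_scale[OF x, of r u] module_on_scale_scale[OF x, of u r]
      module_on_scale_zero_right by (simp add: mult.commute)
  then have "sc r y = sc r n'"
    using y_n' module_on_scale_right_distrib \<open>n' \<in> N\<close> NX module_on_scale[OF x] by auto
  then have ry: "sc r y \<in> N"
    using N \<open>n' \<in> N\<close> unfolding submodule_on_def by simp
  have "y - n = sc (r * s) (y - n)"
    using y regular module_on_scale_scale[OF \<open>z \<in> X\<close>, of "r * s" r] by simp
  also have "\<dots> = sc s (sc r y) - sc (r * s) n"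
    using module_on_scale_right_diff_distrib \<open>y \<in> X\<close> NX \<open>n \<in> N\<close>
      module_on_scale_scale[OF \<open>y \<in> X\<close>, of s r] by (auto simp: mult.commute)
  finally have "y = n + (sc s (sc r y) - sc (r * s) n)"
    by (simp add: algebra_simps)
  moreover have "sc s (sc r y) \<in> N" "sc (r * s) n \<in> N"
    using N ry \<open>n \<in> N\<close> unfolding submodule_on_def by simp_all
  then have "n + (sc s (sc r y) - sc (r * s) n) \<in> N"
    using N \<open>n \<in> N\<close> submodule_on_diff[OF N] unfolding submodule_on_def by simp
  ultimately show False
    using \<open>y \<notin> N\<close> by simp
qed

lemma maximal_avoiding_is_maximal:
  assumes regular: "von_neumann_regular TYPE('r)"
    and N: "submodule_on sc X N" and "y \<in> X" "y \<notin> N"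
    and N_max: "\<And>N'. submodule_on sc X N' \<Longrightarrow> N \<subseteq> N' \<Longrightarrow> y \<notin> N' \<Longrightarrow> N' = N"
  shows "maximal_submodule_on sc X N"
  unfolding maximal_submodule_on_def
proof (intro conjI allI impI)
  show "N \<noteq> X"
    using \<open>y \<in> X\<close> \<open>y \<notin> N\<close> by blast
  fix N'
  assume N': "submodule_on sc X N' \<and> N \<subseteq> N'"
  have "X \<subseteq> N'" if "N' \<noteq> N"
  proof
    fix z
    assume "z \<in> X"
    show "z \<in> N'"
    proof (cases "z \<in> N")
      case False
      obtain n r where "n \<in> N" "y = n + sc r z"
        using maximal_avoiding_absorbs[OF N N_max \<open>z \<in> X\<close> False] .
      moreover obtain s where "r * s * r = r"
        using regular unfolding von_neumann_regular_def by blast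
      ultimately have "z - sc (s * r) z \<in> N"
        using maximal_avoiding_idempotent_part[OF N \<open>y \<in> X\<close> \<open>y \<notin> N\<close> N_max \<open>z \<in> X\<close>] by blast
      moreover have "sc (s * r) z = sc s (y - n)"
        using \<open>y = n + sc r z\<close> module_on_scale_scale[OF \<open>z \<in> X\<close>, of s r] by simp
      moreover have "y - n \<in> N'"
        using N' N_max that \<open>n \<in> N\<close> submodule_on_diff by blast
      ultimately show ?thesis
        using N' unfolding submodule_on_def by (metis diff_add_cancel subsetD)
    qed (use N' in blast)
  qed
  then show "N' = N \<or> N' = X"
    using N' unfolding submodule_on_def by blast
qed (use N in simp)

lemma module_rad_von_neumann_regular:
  assumes "von_neumann_regular TYPE('r)"
  shows "module_rad sc X = {0}"
proof -
  have "y \<notin> module_rad sc X" if "y \<in> X" "y \<noteq> 0" for y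
  proof -
    obtain N where "submodule_on sc X N" "y \<notin> N"
      "\<And>N'. submodule_on sc X N' \<Longrightarrow> N \<subseteq> N' \<Longrightarrow> y \<notin> N' \<Longrightarrow> N' = N"
      using maximal_avoiding_exists[OF \<open>y \<noteq> 0\<close>] by blast
    with maximal_avoiding_is_maximal[OF assms] \<open>y \<in> X\<close> show ?thesis
      unfolding module_rad_def by blast
  qed
  moreover have "0 \<in> module_rad sc X"
    using module_on_zero unfolding module_rad_def maximal_submodule_on_def submodule_on_def by blast
  ultimately show ?thesis
    unfolding module_rad_def by blast
qed

end

lemma module_on_subspace:
  assumes "module scale" "module.subspace scale Y"
  shows "module_on scale Y"
  using module.subspace_0[OF assms] module.subspace_add[OF assms] module.subspace_neg[OF assms]
    module.subspace_scale[OF assms]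
  unfolding module_on_def
  by (simp add: module.scale_right_distrib[OF assms(1)] module.scale_left_distrib[OF assms(1)]
      module.scale_scale[OF assms(1)] module.scale_one[OF assms(1)])

section \<open>Linear maps and linear relations\<close>

context
  fixes scX :: "'r::comm_ring_1 \<Rightarrow> 'x::ab_group_add \<Rightarrow> 'x" and X :: "'x set"
    and scale :: "'r \<Rightarrow> 'm::ab_group_add \<Rightarrow> 'm" and \<rho> :: "'x \<Rightarrow> 'm"
  assumes module_on: "module_on scX X" and module: "module scale"
    and linear: "linear_on scX scale X \<rho>"
begin

lemma linear_on_add: "x \<in> X \<Longrightarrow> y \<in> X \<Longrightarrow> \<rho> (x + y) = \<rho> x + \<rho> y"
  and linear_on_scale: "x \<in> X \<Longrightarrow> \<rho> (scX c x) = scale c (\<rho> x)"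
  using linear unfolding linear_on_def by auto

lemma linear_on_zero: "\<rho> 0 = 0"
  using linear_on_scale[OF module_on_zero[OF module_on], of 0]
    module_on_scale_zero_left[OF module_on module_on_zero[OF module_on]] module.scale_zero_left[OF module]
  by simp

lemma linear_on_diff:
  assumes "x \<in> X" "y \<in> X"
  shows "\<rho> (x - y) = \<rho> x - \<rho> y"
proof -
  have "\<rho> (x - y) + \<rho> y = \<rho> x"
    using linear_on_add[OF module_on_diff[OF module_on assms] assms(2)] by simp
  then show ?thesis
    by (simp add: eq_diff_eq)
qed

lemma linear_on_inj_on:
  assumes "\<And>x. x \<in> X \<Longrightarrow> \<rho> x = 0 \<Longrightarrow> x = 0"
  shows "inj_on \<rho> X"
proof (rule inj_onI)
  fix x y
  assume "x \<in> X" "y \<in> X" "\<rho> x = \<rho> y"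
  then have "x - y = 0"
    using assms[OF module_on_diff[OF module_on]] linear_on_diff by simp
  then show "x = y"
    by simp
qed

lemma subspace_linear_on_image: "module.subspace scale (\<rho> ` X)"
  unfolding module.subspace_def[OF module]
proof (intro conjI ballI allI, safe)
  show "0 \<in> \<rho> ` X"
    using linear_on_zero module_on_zero[OF module_on] by force
  show "\<rho> x + \<rho> y \<in> \<rho> ` X" if "x \<in> X" "y \<in> X" for x y
    using that linear_on_add module_on_add[OF module_on] by (metis image_eqI)
  show "scale c (\<rho> x) \<in> \<rho> ` X" if "x \<in> X" for c x
    using that linear_on_scale module_on_scale[OF module_on] by (metis image_eqI)
qed

lemma laurent_structure_on_linear_on_image:
  assumes inj: "inj_on \<rho> X" and T: "laurent_structure_on scX X T"
  shows "laurent_structure_on scale (\<rho> ` X) (\<rho> \<circ> T \<circ> inv_into X \<rho>)"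
  unfolding laurent_structure_on_def linear_on_def
proof (intro conjI ballI allI)
  let ?T = "\<rho> \<circ> T \<circ> inv_into X \<rho>"
  have T_lin: "\<And>x y. x \<in> X \<Longrightarrow> y \<in> X \<Longrightarrow> T (x + y) = T x + T y"
      "\<And>c x. x \<in> X \<Longrightarrow> T (scX c x) = scX c (T x)" and T_bij: "bij_betw T X X"
    using T unfolding laurent_structure_on_def linear_on_def by auto
  have T_mem: "\<And>x. x \<in> X \<Longrightarrow> T x \<in> X"
    using T_bij bij_betwE by blast
  have T_image: "\<And>x. x \<in> X \<Longrightarrow> ?T (\<rho> x) = \<rho> (T x)"
    using inj by simp
  show "?T (a + b) = ?T a + ?T b" if "a \<in> \<rho> ` X" "b \<in> \<rho> ` X" for a b
  proof -
    from that obtain x y where "x \<in> X" "y \<in> X" "a = \<rho> x" "b = \<rho> y"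
      by blast
    then have "?T (a + b) = ?T (\<rho> (x + y))"
      using linear_on_add by simp
    also have "\<dots> = \<rho> (T (x + y))"
      by (rule T_image[OF module_on_add[OF module_on \<open>x \<in> X\<close> \<open>y \<in> X\<close>]])
    also have "\<dots> = \<rho> (T x) + \<rho> (T y)"
      using T_lin(1) T_mem linear_on_add \<open>x \<in> X\<close> \<open>y \<in> X\<close> by simp
    finally show ?thesis
      using T_image \<open>x \<in> X\<close> \<open>y \<in> X\<close> \<open>a = \<rho> x\<close> \<open>b = \<rho> y\<close> by simp
  qed
  show "?T (scale c a) = scale c (?T a)" if "a \<in> \<rho> ` X" for c a
  proof -
    from that obtain x where "x \<in> X" "a = \<rho> x"
      by blast
    then have "?T (scale c a) = ?T (\<rho> (scX c x))"
      using linear_on_scale by simp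
    also have "\<dots> = \<rho> (T (scX c x))"
      by (rule T_image[OF module_on_scale[OF module_on \<open>x \<in> X\<close>]])
    also have "\<dots> = scale c (\<rho> (T x))"
      using T_lin(2) T_mem linear_on_scale \<open>x \<in> X\<close> by simp
    finally show ?thesis
      using T_image \<open>x \<in> X\<close> \<open>a = \<rho> x\<close> by simp
  qed
  have \<rho>_bij: "bij_betw \<rho> X (\<rho> ` X)"
    using inj by (rule inj_on_imp_bij_betw)
  show "bij_betw ?T (\<rho> ` X) (\<rho> ` X)"
    using bij_betw_trans[OF bij_betw_trans[OF bij_betw_inv_into[OF \<rho>_bij] T_bij] \<rho>_bij]
    by (simp add: comp_assoc)
qed

end

lemma linear_relation_diff:
  assumes "module scale" "linear_relation scale C" "(a, b) \<in> C" "(a, c) \<in> C"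
  shows "(0, b - c) \<in> C"
proof -
  have "(a + scale (- 1) a, b + scale (- 1) c) \<in> C"
    using assms(2-4) unfolding linear_relation_def by force
  then show ?thesis
    using module.scale_minus_left[OF assms(1), of 1] module.scale_one[OF assms(1)] by simp
qed

lemma zero_mem_rel_dd: "(0, 0) \<in> C \<Longrightarrow> 0 \<in> rel_dd C"
  unfolding rel_dd_def rel_app_def by (auto intro: exI[of _ "\<lambda>_. 0"])

lemma zero_mem_rel_d: "(0, 0) \<in> C \<Longrightarrow> 0 \<in> rel_d C"
  unfolding rel_d_def rel_app_def by (auto intro: exI[of _ "\<lambda>_. 0"])

lemma rel_dd_image_of_zero_in_rel_flat:
  assumes "(0, 0) \<in> C" "(0, w) \<in> C" "w \<in> rel_dd C"
  shows "w \<in> rel_flat C"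
proof -
  have "(0, 0) \<in> rel_inv C"
    using assms(1) unfolding rel_inv_def by simp
  have "\<forall>n. (\<lambda>n. if n = 0 then w else 0) (Suc n) \<in> rel_app (rel_inv C) (if n = 0 then w else 0)"
    using assms(1,2) unfolding rel_inv_def rel_app_def by auto
  then have "w \<in> rel_d (rel_inv C)"
    unfolding rel_d_def by (auto intro!: exI[of _ "\<lambda>n. if n = 0 then w else 0"] exI[of _ 1])
  moreover have "0 \<in> rel_dd (rel_inv C) \<inter> rel_d C"
    using zero_mem_rel_dd[OF \<open>(0, 0) \<in> rel_inv C\<close>] zero_mem_rel_d[OF assms(1)] by blast
  ultimately have "w + 0 \<in> rel_flat C"
    using assms(3) unfolding rel_flat_def set_plus_def by blast
  then show ?thesis
    by simp
qed

lemma zero_mem_rel_flat: "(0, 0) \<in> C \<Longrightarrow> 0 \<in> rel_flat C"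
  using rel_dd_image_of_zero_in_rel_flat zero_mem_rel_dd by blast

lemma rel_graph_on_complement:
  assumes "module scale" and C: "linear_relation scale C" and Y: "module.subspace scale Y"
    and "Y \<subseteq> rel_sharp C" "rel_flat C \<inter> Y = {0}"
    and T_mem: "\<And>y. y \<in> Y \<Longrightarrow> T y \<in> Y" and T_rel: "\<And>y. y \<in> Y \<Longrightarrow> T y \<in> rel_app C y"
  assumes "y \<in> Y" "z \<in> Y"
  shows "T y = z \<longleftrightarrow> z \<in> rel_app C y"
proof
  assume "z \<in> rel_app C y"
  then have "(0, T y - z) \<in> C"
    using linear_relation_diff[OF assms(1) C] T_rel[OF \<open>y \<in> Y\<close>] unfolding rel_app_def by blast
  moreover have "T y - z \<in> Y"
    using module.subspace_diff[OF assms(1) Y T_mem] \<open>y \<in> Y\<close> \<open>z \<in> Y\<close> by blast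
  moreover have "(0, 0) \<in> C"
    using C unfolding linear_relation_def by blast
  ultimately have "T y - z \<in> rel_flat C \<inter> Y"
    using rel_dd_image_of_zero_in_rel_flat \<open>Y \<subseteq> rel_sharp C\<close> unfolding rel_sharp_def by blast
  then show "T y = z"
    using \<open>rel_flat C \<inter> Y = {0}\<close> by simp
qed (use T_rel \<open>y \<in> Y\<close> in blast)

section \<open>Reductions and complements of the flat part\<close>

definition laurent_complement ::
  "('r::comm_ring_1 \<Rightarrow> 'm::ab_group_add \<Rightarrow> 'm) \<Rightarrow> ('m \<times> 'm) set \<Rightarrow> 'm set \<Rightarrow> ('m \<Rightarrow> 'm) \<Rightarrow> bool"
  where "laurent_complement scale C Y T \<longleftrightarrow>
    module.subspace scale Y \<and> laurent_structure_on scale Y T \<and>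
    (\<forall>y\<in>Y. \<forall>z\<in>Y. T y = z \<longleftrightarrow> z \<in> rel_app C y) \<and>
    rel_flat C \<inter> Y = {0} \<and> rel_sharp C = set_plus (rel_flat C) Y"

lemma laurent_complement_of_reduction:
  assumes regular: "von_neumann_regular TYPE('r::comm_ring_1)"
    and module: "module (scale :: 'r \<Rightarrow> 'm::ab_group_add \<Rightarrow> 'm)" and C: "linear_relation scale C"
    and red: "is_reduction scale C scX X T \<rho>" and rad: "meets_in_radical C scX X \<rho>"
  shows "laurent_complement scale C (\<rho> ` X) (\<rho> \<circ> T \<circ> inv_into X \<rho>)"
proof -
  let ?Y = "\<rho> ` X" and ?T = "\<rho> \<circ> T \<circ> inv_into X \<rho>"
  have X: "module_on scX X" and T: "laurent_structure_on scX X T" and \<rho>: "linear_on scX scale X \<rho>"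
    and sharp: "rel_sharp C = set_plus (rel_flat C) ?Y"
    and T_rel: "\<And>x. x \<in> X \<Longrightarrow> \<rho> (T x) \<in> rel_app C (\<rho> x)"
    using red unfolding is_reduction_def by auto
  have flat_zero: "x = 0" if "x \<in> X" "\<rho> x \<in> rel_flat C" for x
    using rad that module_rad_von_neumann_regular[OF X regular] unfolding meets_in_radical_def by blast
  have "0 \<in> rel_flat C"
    using zero_mem_rel_flat C unfolding linear_relation_def by blast
  then have inj: "inj_on \<rho> X"
    using linear_on_inj_on[OF X module \<rho>] flat_zero by metis
  have Y: "module.subspace scale ?Y"
    using subspace_linear_on_image[OF X module \<rho>] .
  have T_Y: "laurent_structure_on scale ?Y ?T"
    using laurent_structure_on_linear_on_image[OF X module \<rho> inj T] .
  have flat_Y: "rel_flat C \<inter> ?Y = {0}"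
    using flat_zero linear_on_zero[OF X module \<rho>] module_on_zero[OF X] \<open>0 \<in> rel_flat C\<close> by force
  have "?Y \<subseteq> rel_sharp C"
    using sharp \<open>0 \<in> rel_flat C\<close> unfolding set_plus_def by force
  moreover have "T x \<in> X" if "x \<in> X" for x
    using T that unfolding laurent_structure_on_def bij_betw_def by blast
  then have "?T y \<in> ?Y" "?T y \<in> rel_app C y" if "y \<in> ?Y" for y
    using that T_rel inj by auto
  ultimately have "\<forall>y\<in>?Y. \<forall>z\<in>?Y. ?T y = z \<longleftrightarrow> z \<in> rel_app C y"
    using rel_graph_on_complement[OF module C Y _ flat_Y] by blast
  with Y T_Y flat_Y sharp show ?thesis
    unfolding laurent_complement_def by blast
qed

lemma reduction_of_laurent_complement:
  assumes "von_neumann_regular TYPE('r::comm_ring_1)"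
    and "module (scale :: 'r \<Rightarrow> 'm::ab_group_add \<Rightarrow> 'm)" and "laurent_complement scale C Y T"
  shows "is_reduction scale C scale Y T id \<and> meets_in_radical C scale Y id"
proof -
  have Y: "module_on scale Y"
    using module_on_subspace assms(2,3) unfolding laurent_complement_def by blast
  have "T y \<in> Y" if "y \<in> Y" for y
    using assms(3) that unfolding laurent_complement_def laurent_structure_on_def bij_betw_def by blast
  then have "is_reduction scale C scale Y T id"
    using assms(3) Y unfolding is_reduction_def laurent_complement_def linear_on_def by auto
  moreover have "meets_in_radical C scale Y id"
    using assms(3) module_rad_von_neumann_regular[OF Y assms(1)]
    unfolding meets_in_radical_def laurent_complement_def by auto
  ultimately show ?thesis ..
qed

theorem proposition4p10:
  fixes scale :: "'r::comm_ring_1 \<Rightarrow> 'm::ab_group_add \<Rightarrow> 'm"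
    and C :: "('m \<times> 'm) set"
  assumes "semisimple_ring TYPE('r)"
    and "module scale"
    and "linear_relation scale C"
  shows "((\<exists>(scX :: 'r \<Rightarrow> 'x::ab_group_add \<Rightarrow> 'x) X TX \<rho>.
              is_reduction scale C scX X TX \<rho> \<and> meets_in_radical C scX X \<rho>)
           \<longrightarrow> (\<exists>Y TY. module.subspace scale Y \<and> laurent_structure_on scale Y TY \<and>
                 (\<forall>y\<in>Y. \<forall>z\<in>Y. TY y = z \<longleftrightarrow> z \<in> rel_app C y) \<and>
                 rel_flat C \<inter> Y = {0} \<and> rel_sharp C = set_plus (rel_flat C) Y))
       \<and> ((\<exists>Y TY. module.subspace scale Y \<and> laurent_structure_on scale Y TY \<and>
                 (\<forall>y\<in>Y. \<forall>z\<in>Y. TY y = z \<longleftrightarrow> z \<in> rel_app C y) \<and>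
                 rel_flat C \<inter> Y = {0} \<and> rel_sharp C = set_plus (rel_flat C) Y)
           \<longrightarrow> (\<exists>(scX :: 'r \<Rightarrow> 'm \<Rightarrow> 'm) X TX \<rho>.
              is_reduction scale C scX X TX \<rho> \<and> meets_in_radical C scX X \<rho>))"
proof -
  have regular: "von_neumann_regular TYPE('r)"
    using semisimple_ring_imp_von_neumann_regular[OF assms(1)] .
  show ?thesis
    unfolding laurent_complement_def[symmetric]
    using laurent_complement_of_reduction[OF regular assms(2,3)]
      reduction_of_laurent_complement[OF regular assms(2)]
    by blast
qed

end
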